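(* Let $\lambda\in(\frac16,\frac56)$ and $x\in[0,1]\setminus\mathcal E$. For $n\ge1$ let $m^+_n$ be the maximum of the absolute values of the slopes of $F^\lambda_n$. If $m_n(x)\neq0$, then $\sqrt{36\lambda^2-1}\le|m_n(x)|\le m^+_n$, and $m^+_n\asymp(6\lambda+1)^n$, i.e. there are constants $0<c\le C$ depending only on $\lambda$ with $c(6\lambda+1)^n\le m^+_n\le C(6\lambda+1)^n$ for all $n\ge1$. Moreover, if $\lambda>\frac13$, then for every $x\in[0,1]\setminus\widetilde{\mathcal E}$, $\lim_{n\to\infty}|m_n(x)|=+\infty$.
   Context: Construction: $F^\lambda_0\equiv0$ on $[0,1]$ (one interval of generation $0$). Given $F^\lambda_n$ with its $4^n$ closed intervals of generation $n$ (covering $[0,1]$, disjoint interiors, $F^\lambda_n$ affine on each), on each interval $[a,b]$ of generation $n$, with $\ell=b-a$ and slope $m$, $F^\lambda_{n+1}$ coincides with $F^\lambda_n$ at $a,a+\ell/3,a+2\ell/3,b$, equals $F^\lambda_n(a+\ell/2)+\lambda\ell\sqrt{1+m^2}$ at $a+\ell/2$, and is affine on $[a,a+\ell/3],[a+\ell/3,a+\ell/2],[a+\ell/2,a+2\ell/3],[a+2\ell/3,b]$. Dynamics: $T(x)=3x$ on $[0,\frac13)$, $6x-2$ on $[\frac13,\frac12)$, $4-6x$ on $[\frac12,\frac23)$, $3x-2$ on $[\frac23,1]$; $U(x)=0,1,2,3$ on these intervals respectively; $u_n(x)=U(T^nx)$; $\beta_{1,2}(x,n)=\#\{k<n:u_k(x)\in\{1,2\}\}$.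 $\mathcal E$ is the set of $x$ whose digit sequence $(u_n(x))$ is eventually constantly $0$ or eventually constantly $3$; $\widetilde{\mathcal E}\supset\mathcal E$ is the set of $x$ for which $(\beta_{1,2}(x,n))_n$ is eventually constant. For $x\notin\mathcal E$, $F^\lambda_n$ is differentiable at $x$ and $m_n(x)$ is its slope at $x$. *)

theory Defs
  imports "HOL-Analysis.Analysis"
begin

primrec Ivs :: "nat \<Rightarrow> (real \<times> real) set" where
  "Ivs 0 = {(0, 1)}"
| "Ivs (Suc n) = (\<Union>(a, b)\<in>Ivs n.
     {(a, a + (b - a) / 3), (a + (b - a) / 3, a + (b - a) / 2),
      (a + (b - a) / 2, a + 2 * (b - a) / 3), (a + 2 * (b - a) / 3, b)})"

definition interp :: "real \<Rightarrow> real \<Rightarrow> real \<Rightarrow> real \<Rightarrow> real \<Rightarrow> real" where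
  "interp x0 y0 x1 y1 x = y0 + (y1 - y0) / (x1 - x0) * (x - x0)"

primrec Fl :: "real \<Rightarrow> nat \<Rightarrow> real \<Rightarrow> real" where
  "Fl lam 0 x = 0"
| "Fl lam (Suc n) x =
     (let ab = (SOME p. p \<in> Ivs n \<and> fst p \<le> x \<and> x \<le> snd p);
          a = fst ab; b = snd ab; f = Fl lam n;
          l = b - a; m = (f b - f a) / l;
          p1 = a + l / 3; p2 = a + l / 2; p3 = a + 2 * l / 3;
          y1 = f p1; y2 = f p2 + lam * l * sqrt (1 + m\<^sup>2); y3 = f p3
      in if x \<le> p1 then interp a (f a) p1 y1 x
         else if x \<le> p2 then interp p1 y1 p2 y2 x
         else if x \<le> p3 then interp p2 y2 p3 y3 x
         else interp p3 y3 b (f b) x)"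

definition slope_m :: "real \<Rightarrow> nat \<Rightarrow> real \<Rightarrow> real" where
  "slope_m lam n x = deriv (Fl lam n) x"

definition mplus :: "real \<Rightarrow> nat \<Rightarrow> real" where
  "mplus lam n = Max ((\<lambda>(a, b). \<bar>(Fl lam n b - Fl lam n a) / (b - a)\<bar>) ` Ivs n)"

definition Tmap :: "real \<Rightarrow> real" where
  "Tmap x = (if x < 1/3 then 3 * x else if x < 1/2 then 6 * x - 2
             else if x < 2/3 then 4 - 6 * x else 3 * x - 2)"

definition Umap :: "real \<Rightarrow> nat" where
  "Umap x = (if x < 1/3 then 0 else if x < 1/2 then 1 else if x < 2/3 then 2 else 3)"

definition digit :: "nat \<Rightarrow> real \<Rightarrow> nat" where
  "digit n x = Umap ((Tmap ^^ n) x)"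

definition beta12 :: "real \<Rightarrow> nat \<Rightarrow> nat" where
  "beta12 x n = card {k. k < n \<and> digit k x \<in> {1, 2}}"

definition Eset :: "real set" where
  "Eset = {x. \<exists>N. (\<forall>k\<ge>N. digit k x = 0) \<or> (\<forall>k\<ge>N. digit k x = 3)}"

definition Etilde :: "real set" where
  "Etilde = {x. \<exists>N. \<forall>k\<ge>N. beta12 x k = beta12 x N}"

end

(*
  On a generation-n interval of slope m, F_(n+1) keeps the slope m on the outer thirds and,
  since the midpoint is raised by lam l sqrt(1 + m^2) over pieces of length l/6, has slopes
  m + 6 lam sqrt(1 + m^2) and m - 6 lam sqrt(1 + m^2) on the two middle pieces. For K >= 1 both
  values of m +- K sqrt(1 + m^2) have absolute value at least sqrt(K^2 - 1) and at least
  (K - 1) sqrt(1 + m^2), and at most |m| + K (1 + |m|). With K = 6 lam this gives the lower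
  bound on nonzero slopes and (6 lam + 1) m+_n <= m+_(n+1) <= (6 lam + 1) m+_n + 6 lam.
  The generation-n interval containing x is found by following the orbit of x under the folding
  map T: digits 0 and 3 select an outer piece, digits 1 and 2 a middle one. Hence the slope
  at x is multiplied by at least 6 lam - 1 at each digit 1 or 2, and diverges when there are
  infinitely many of them.
*)

theory Submission
  imports Defs
begin

section \<open>Generation intervals\<close>

definition cut_point :: "nat \<Rightarrow> real" where
  "cut_point i =
    (if i = 0 then 0 else if i = 1 then 1/3 else if i = 2 then 1/2 else if i = 3 then 2/3 else 1)"

definition node :: "real \<times> real \<Rightarrow> nat \<Rightarrow> real" where
  "node p i = fst p + cut_point i * (snd p - fst p)"

definition child :: "nat \<Rightarrow> real \<times> real \<Rightarrow> real \<times> real" where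
  "child i p = (node p i, node p (Suc i))"

lemma less_4_cases: "(i::nat) < 4 \<longleftrightarrow> i = 0 \<or> i = 1 \<or> i = 2 \<or> i = 3"
  by auto

lemma child_simps:
  "child 0 (a, b) = (a, a + (b - a) / 3)"
  "child 1 (a, b) = (a + (b - a) / 3, a + (b - a) / 2)"
  "child 2 (a, b) = (a + (b - a) / 2, a + 2 * (b - a) / 3)"
  "child 3 (a, b) = (a + 2 * (b - a) / 3, b)"
  by (simp_all add: child_def node_def cut_point_def)

lemma Ivs_Suc_iff: "p \<in> Ivs (Suc n) \<longleftrightarrow> (\<exists>q\<in>Ivs n. \<exists>i<4. p = child i q)"
proof -
  have "{child i (a, b) |i. i < 4} = {child 0 (a, b), child 1 (a, b), child 2 (a, b), child 3 (a, b)}"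
    for a b
    unfolding less_4_cases by blast
  then have "Ivs (Suc n) = (\<Union>(a, b)\<in>Ivs n. {child i (a, b) |i. i < 4})"
    by (simp only: Ivs.simps child_simps)
  then show ?thesis by auto
qed

declare Ivs.simps(2) [simp del]

lemma child_in_Ivs: "q \<in> Ivs n \<Longrightarrow> i < 4 \<Longrightarrow> child i q \<in> Ivs (Suc n)"
  by (auto simp: Ivs_Suc_iff)

lemma cut_point_strict_mono: "i < j \<Longrightarrow> j \<le> 4 \<Longrightarrow> cut_point i < cut_point j"
  by (auto simp: cut_point_def)

lemma node_strict_mono: "a < b \<Longrightarrow> i < j \<Longrightarrow> j \<le> 4 \<Longrightarrow> node (a, b) i < node (a, b) j"
  using cut_point_strict_mono by (simp add: node_def)

lemma node_mono: "a < b \<Longrightarrow> i \<le> j \<Longrightarrow> j \<le> 4 \<Longrightarrow> node (a, b) i \<le> node (a, b) j"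
  by (metis le_less node_strict_mono)

lemma node_0 [simp]: "node (a, b) 0 = a" and node_4 [simp]: "node (a, b) 4 = b"
  by (simp_all add: node_def cut_point_def)

lemma child_within:
  assumes "a < b" "i < 4" "child i (a, b) = (c, d)"
  shows "a \<le> c" "c < d" "d \<le> b"
proof -
  have "node (a, b) 0 \<le> node (a, b) i" "node (a, b) (Suc i) \<le> node (a, b) 4"
    using node_mono[OF assms(1), of 0 i] node_mono[OF assms(1), of "Suc i" 4] assms(2) by simp_all
  then show "a \<le> c" "c < d" "d \<le> b"
    using assms node_strict_mono[OF assms(1), of i "Suc i"] by (auto simp: child_def)
qed

lemma node_swap: "i \<le> 4 \<Longrightarrow> node (prod.swap p) i = node p (4 - i)"
  unfolding le_Suc_eq less_4_cases[symmetric] less_4_cases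
  by (auto simp: node_def cut_point_def algebra_simps)

lemma child_swap:
  assumes "i < 4"
  shows "child i (prod.swap p) = prod.swap (child (3 - i) p)"
proof -
  have "Suc i \<le> 4" "4 - i = Suc (3 - i)" using assms by auto
  then show ?thesis by (simp add: child_def node_swap)
qed

lemma Ivs_lt: "(a, b) \<in> Ivs n \<Longrightarrow> a < b"
proof (induction n arbitrary: a b)
  case (Suc n)
  then obtain A B i where "(A, B) \<in> Ivs n" "i < 4" "(a, b) = child i (A, B)"
    by (auto simp: Ivs_Suc_iff)
  with Suc.IH show ?case by (metis child_within(2))
qed simp

lemma Ivs_finite: "finite (Ivs n)"
  by (induction n) (auto simp: Ivs.simps)

lemma Ivs_nonempty: "Ivs n \<noteq> {}"
proof (induction n)
  case (Suc n)
  then obtain q where "q \<in> Ivs n" by blast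
  then show ?case using child_in_Ivs[of q n 0] by auto
qed simp

lemma Ivs_common_point:
  assumes "(a, b) \<in> Ivs n" "(c, d) \<in> Ivs n" "(a, b) \<noteq> (c, d)" "z \<in> {a..b}" "z \<in> {c..d}"
  shows "z = a \<or> z = b"
  using assms
proof (induction n arbitrary: a b c d)
  case (Suc n)
  obtain A B i where AB: "(A, B) \<in> Ivs n" "i < 4" "(a, b) = child i (A, B)"
    using Suc.prems(1) by (auto simp: Ivs_Suc_iff)
  obtain C D j where CD: "(C, D) \<in> Ivs n" "j < 4" "(c, d) = child j (C, D)"
    using Suc.prems(2) by (auto simp: Ivs_Suc_iff)
  have "A < B" "C < D" using AB(1) CD(1) by (simp_all add: Ivs_lt)
  show ?case
  proof (cases "(A, B) = (C, D)")
    case True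
    then have "i \<noteq> j" using AB(3) CD(3) Suc.prems(3) by auto
    then have "node (A, B) (Suc i) \<le> node (A, B) j \<or> node (A, B) (Suc j) \<le> node (A, B) i"
      using node_mono[OF \<open>A < B\<close>, of "Suc i" j] node_mono[OF \<open>A < B\<close>, of "Suc j" i] AB(2) CD(2)
      by linarith
    then show ?thesis using True AB(3) CD(3) Suc.prems(4,5) by (auto simp: child_def)
  next
    case False
    have "A \<le> a" "b \<le> B" "C \<le> c" "d \<le> D"
      using child_within \<open>A < B\<close> \<open>C < D\<close> AB(2,3) CD(2,3) by metis+
    with Suc.IH[OF AB(1) CD(1) False] Suc.prems(4,5) show ?thesis by fastforce
  qed
qed simp

section \<open>Slopes of the functions F_n\<close>

definition refine :: "real \<Rightarrow> (real \<Rightarrow> real) \<Rightarrow> real \<Rightarrow> real \<Rightarrow> real \<Rightarrow> real" where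
  "refine lam f a b x =
     (let l = b - a; m = (f b - f a) / l;
          p1 = a + l / 3; p2 = a + l / 2; p3 = a + 2 * l / 3;
          y1 = f p1; y2 = f p2 + lam * l * sqrt (1 + m\<^sup>2); y3 = f p3
      in if x \<le> p1 then interp a (f a) p1 y1 x
         else if x \<le> p2 then interp p1 y1 p2 y2 x
         else if x \<le> p3 then interp p2 y2 p3 y3 x
         else interp p3 y3 b (f b) x)"

lemma interp_left [simp]: "interp x0 y0 x1 y1 x0 = y0"
  by (simp add: interp_def)

lemma interp_right [simp]: "x0 \<noteq> x1 \<Longrightarrow> interp x0 y0 x1 y1 x1 = y1"
  by (simp add: interp_def)

lemma refine_node:
  assumes "a < b" "i \<le> 4"
  shows "refine lam f a b (node (a, b) i) =
    f (node (a, b) i) + (if i = 2 then lam * (b - a) * sqrt (1 + ((f b - f a) / (b - a))\<^sup>2) else 0)"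
proof -
  consider "i = 0" | "i = 1" | "i = 2" | "i = 3" | "i = 4" using assms(2) by linarith
  then show ?thesis
    using assms(1) by cases (auto simp: refine_def Let_def node_def cut_point_def diff_divide_distrib)
qed

lemma refine_on_child:
  assumes "a < b" "i < 4" "node (a, b) i \<le> z" "z \<le> node (a, b) (Suc i)"
  shows "refine lam f a b z = interp (node (a, b) i) (refine lam f a b (node (a, b) i))
                                     (node (a, b) (Suc i)) (refine lam f a b (node (a, b) (Suc i))) z"
proof -
  note defs = refine_def Let_def node_def cut_point_def diff_divide_distrib
  consider "i = 0" | "i = 1" | "i = 2" | "i = 3" using assms(2) by linarith
  then show ?thesis
  proof cases
    case 1 with assms show ?thesis by (auto simp: defs)
  next
    case 2 with assms show ?thesis by (cases "z = a + (b - a) / 3") (auto simp: defs)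
  next
    case 3 with assms show ?thesis by (cases "z = a + (b - a) / 2") (auto simp: defs)
  next
    case 4 with assms show ?thesis by (cases "z = a + 2 * (b - a) / 3") (auto simp: defs)
  qed
qed

declare Fl.simps(2) [simp del]

lemma refine_left: "a < b \<Longrightarrow> refine lam f a b a = f a"
  and refine_right: "a < b \<Longrightarrow> refine lam f a b b = f b"
  using refine_node[of a b 0] refine_node[of a b 4] by simp_all

lemma Fl_Suc_eq_refine:
  assumes "(a, b) \<in> Ivs n" "z \<in> {a..b}"
  shows "Fl lam (Suc n) z = refine lam (Fl lam n) a b z"
proof -
  \<comment> \<open>At a common endpoint of two intervals the SOME-choice is ambiguous, but both
    refinements agree with F_n there.\<close>
  define p where "p = (SOME p. p \<in> Ivs n \<and> fst p \<le> z \<and> z \<le> snd p)"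
  have "p \<in> Ivs n \<and> fst p \<le> z \<and> z \<le> snd p"
    unfolding p_def by (rule someI[of _ "(a, b)"]) (use assms in auto)
  moreover obtain c d where p: "p = (c, d)" by fastforce
  ultimately have cd: "(c, d) \<in> Ivs n" "z \<in> {c..d}" by auto
  have Fl_z: "Fl lam (Suc n) z = refine lam (Fl lam n) c d z"
    by (simp add: Fl.simps(2) refine_def Let_def p_def[symmetric] p)
  show ?thesis
  proof (cases "(a, b) = (c, d)")
    case False
    then have "z = a \<or> z = b" "z = c \<or> z = d"
      using Ivs_common_point[OF assms(1) cd(1)] Ivs_common_point[OF cd(1) assms(1)] assms(2) cd(2)
      by auto
    then show ?thesis
      using Fl_z Ivs_lt[OF assms(1)] Ivs_lt[OF cd(1)] by (auto simp: refine_left refine_right)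
  qed (use Fl_z in simp)
qed

definition chord_slope :: "(real \<Rightarrow> real) \<Rightarrow> real \<times> real \<Rightarrow> real" where
  "chord_slope f p = (f (snd p) - f (fst p)) / (snd p - fst p)"

lemma chord_slope_swap: "chord_slope f (prod.swap p) = chord_slope f p"
  unfolding chord_slope_def by (metis fst_swap snd_swap minus_diff_eq minus_divide_divide)

lemma Fl_affine:
  assumes "(a, b) \<in> Ivs n" "z \<in> {a..b}"
  shows "Fl lam n z = Fl lam n a + chord_slope (Fl lam n) (a, b) * (z - a)"
proof (cases n)
  case (Suc k)
  obtain A B i where AB: "(A, B) \<in> Ivs k" "i < 4" "(a, b) = child i (A, B)"
    using assms(1) by (auto simp: Suc Ivs_Suc_iff)
  have "A < B" using AB(1) by (rule Ivs_lt)
  have ab: "A \<le> a" "a < b" "b \<le> B" using child_within[OF \<open>A < B\<close> AB(2) AB(3)[symmetric]] by auto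
  have "Fl lam n w = refine lam (Fl lam k) A B w" if "w \<in> {a..b}" for w
    using Fl_Suc_eq_refine[OF AB(1), of w] that ab by (simp add: Suc)
  moreover have "refine lam (Fl lam k) A B z =
      interp a (refine lam (Fl lam k) A B a) b (refine lam (Fl lam k) A B b) z"
  proof -
    have nodes: "a = node (A, B) i" "b = node (A, B) (Suc i)" using AB(3) by (simp_all add: child_def)
    show ?thesis using assms(2) unfolding nodes by (intro refine_on_child[OF \<open>A < B\<close> AB(2)]) auto
  qed
  ultimately show ?thesis using assms(2) ab by (simp add: interp_def chord_slope_def)
qed (simp add: chord_slope_def)

lemma Fl_Suc_node:
  fixes lam :: real
  assumes "(a, b) \<in> Ivs n" "i \<le> 4"
  defines "m \<equiv> chord_slope (Fl lam n) (a, b)"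
  shows "Fl lam (Suc n) (node (a, b) i) =
    Fl lam n a + m * cut_point i * (b - a) + (if i = 2 then lam * (b - a) * sqrt (1 + m\<^sup>2) else 0)"
proof -
  have "a < b" using assms(1) by (rule Ivs_lt)
  have "node (a, b) i \<in> {a..b}"
    using node_mono[OF \<open>a < b\<close>, of 0 i] node_mono[OF \<open>a < b\<close>, of i 4] assms(2) by simp
  then have "Fl lam (Suc n) (node (a, b) i) = refine lam (Fl lam n) a b (node (a, b) i)"
    by (rule Fl_Suc_eq_refine[OF assms(1)])
  also have "\<dots> = Fl lam n (node (a, b) i) + (if i = 2 then lam * (b - a) * sqrt (1 + m\<^sup>2) else 0)"
    using refine_node[OF \<open>a < b\<close> assms(2)] by (simp add: m_def chord_slope_def)
  also have "Fl lam n (node (a, b) i) = Fl lam n a + m * cut_point i * (b - a)"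
    using Fl_affine[OF assms(1) \<open>node (a, b) i \<in> {a..b}\<close>] by (simp add: m_def node_def)
  finally show ?thesis .
qed

lemma chord_slope_child:
  fixes lam :: real
  assumes "(a, b) \<in> Ivs n" "i < 4"
  defines "m \<equiv> chord_slope (Fl lam n) (a, b)"
  shows "chord_slope (Fl lam (Suc n)) (child i (a, b)) =
    (if i = 1 then m + 6 * lam * sqrt (1 + m\<^sup>2)
     else if i = 2 then m - 6 * lam * sqrt (1 + m\<^sup>2) else m)" (is "_ = ?rhs")
proof -
  have "a < b" using assms(1) by (rule Ivs_lt)
  let ?d = "(cut_point (Suc i) - cut_point i) * (b - a)"
  let ?bump = "\<lambda>i. if i = 2 then lam * (b - a) * sqrt (1 + m\<^sup>2) else 0"
  have "chord_slope (Fl lam (Suc n)) (child i (a, b)) =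
      (Fl lam (Suc n) (node (a, b) (Suc i)) - Fl lam (Suc n) (node (a, b) i)) / ?d"
    by (simp add: chord_slope_def child_def node_def algebra_simps)
  also have "\<dots> = (m * ?d + ?bump (Suc i) - ?bump i) / ?d"
    using Fl_Suc_node[OF assms(1), of i lam, folded m_def]
      Fl_Suc_node[OF assms(1), of "Suc i" lam, folded m_def] assms(2)
    by (simp add: algebra_simps)
  also have "\<dots> = ?rhs"
  proof -
    have "i = 0 \<or> i = 1 \<or> i = 2 \<or> i = 3" using assms(2) by linarith
    then show ?thesis using \<open>a < b\<close> by (auto simp: cut_point_def field_simps)
  qed
  finally show ?thesis .
qed

lemma abs_le_sqrt_one_plus_square: "\<bar>m\<bar> \<le> sqrt (1 + m\<^sup>2)"
  and one_le_sqrt_one_plus_square: "1 \<le> sqrt (1 + m\<^sup>2)"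
  and sqrt_one_plus_square_le: "sqrt (1 + m\<^sup>2) \<le> 1 + \<bar>m\<bar>"
  for m :: real
  using real_le_rsqrt[of "\<bar>m\<bar>" "1 + m\<^sup>2"] real_le_rsqrt[of 1 "1 + m\<^sup>2"]
    sqrt_sum_squares_le_sum_abs[of 1 m] by simp_all

lemma abs_slope_bump_ge_sqrt:
  fixes m K :: real
  assumes "1 \<le> K"
  shows "sqrt (K\<^sup>2 - 1) \<le> \<bar>m + K * sqrt (1 + m\<^sup>2)\<bar>"
        "sqrt (K\<^sup>2 - 1) \<le> \<bar>m - K * sqrt (1 + m\<^sup>2)\<bar>"
proof -
  define s where "s = sqrt (1 + m\<^sup>2)"
  have "\<bar>m\<bar> \<le> s" "s\<^sup>2 = 1 + \<bar>m\<bar>\<^sup>2" unfolding s_def by (simp_all add: abs_le_sqrt_one_plus_square)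
  moreover have "s \<le> K * s" using assms \<open>\<bar>m\<bar> \<le> s\<close> by (simp add: mult_le_cancel_right1)
  ultimately have "0 \<le> K * s - \<bar>m\<bar>" "(K * s - \<bar>m\<bar>)\<^sup>2 = (K\<^sup>2 - 1) + (K * \<bar>m\<bar> - s)\<^sup>2"
    by (simp_all add: power2_eq_square algebra_simps)
  then have "sqrt (K\<^sup>2 - 1) \<le> K * s - \<bar>m\<bar>"
    by (metis le_add_same_cancel1 real_le_lsqrt real_sqrt_le_mono zero_le_power2)
  then show "sqrt (K\<^sup>2 - 1) \<le> \<bar>m + K * sqrt (1 + m\<^sup>2)\<bar>"
        "sqrt (K\<^sup>2 - 1) \<le> \<bar>m - K * sqrt (1 + m\<^sup>2)\<bar>"
    unfolding s_def[symmetric] by linarith+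
qed

lemma abs_slope_bump_ge:
  fixes m K :: real
  assumes "1 \<le> K"
  shows "(K - 1) * sqrt (1 + m\<^sup>2) \<le> \<bar>m + K * sqrt (1 + m\<^sup>2)\<bar>"
        "(K - 1) * sqrt (1 + m\<^sup>2) \<le> \<bar>m - K * sqrt (1 + m\<^sup>2)\<bar>"
proof -
  define s where "s = sqrt (1 + m\<^sup>2)"
  have "\<bar>m\<bar> \<le> s" "(K - 1) * s = K * s - s"
    using abs_le_sqrt_one_plus_square[of m] by (simp_all add: s_def algebra_simps)
  moreover have "s \<le> K * s" using mult_right_mono[OF assms, of s] \<open>\<bar>m\<bar> \<le> s\<close> by simp
  ultimately show "(K - 1) * sqrt (1 + m\<^sup>2) \<le> \<bar>m + K * sqrt (1 + m\<^sup>2)\<bar>"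
        "(K - 1) * sqrt (1 + m\<^sup>2) \<le> \<bar>m - K * sqrt (1 + m\<^sup>2)\<bar>"
    unfolding s_def[symmetric] by linarith+
qed

lemma abs_slope_bump_le:
  fixes m K :: real
  assumes "0 \<le> K"
  shows "\<bar>m + K * sqrt (1 + m\<^sup>2)\<bar> \<le> \<bar>m\<bar> + K * (1 + \<bar>m\<bar>)"
        "\<bar>m - K * sqrt (1 + m\<^sup>2)\<bar> \<le> \<bar>m\<bar> + K * (1 + \<bar>m\<bar>)"
proof -
  have "K * sqrt (1 + m\<^sup>2) \<le> K * (1 + \<bar>m\<bar>)" "0 \<le> K * sqrt (1 + m\<^sup>2)"
    using assms sqrt_one_plus_square_le by (simp_all add: mult_left_mono)
  then show "\<bar>m + K * sqrt (1 + m\<^sup>2)\<bar> \<le> \<bar>m\<bar> + K * (1 + \<bar>m\<bar>)"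
        "\<bar>m - K * sqrt (1 + m\<^sup>2)\<bar> \<le> \<bar>m\<bar> + K * (1 + \<bar>m\<bar>)"
    by linarith+
qed

lemma chord_slope_zero_or_ge:
  assumes "1/6 \<le> lam" "(a, b) \<in> Ivs n"
  shows "chord_slope (Fl lam n) (a, b) = 0 \<or>
    sqrt (36 * lam\<^sup>2 - 1) \<le> \<bar>chord_slope (Fl lam n) (a, b)\<bar>"
  using assms(2)
proof (induction n arbitrary: a b)
  case 0
  then show ?case by (simp add: chord_slope_def)
next
  case (Suc n)
  then obtain A B i where AB: "(A, B) \<in> Ivs n" "i < 4" "(a, b) = child i (A, B)"
    by (auto simp: Ivs_Suc_iff)
  have "36 * lam\<^sup>2 - 1 = (6 * lam)\<^sup>2 - 1" by (simp add: power2_eq_square)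
  then show ?case
    using Suc.IH[OF AB(1)] chord_slope_child[OF AB(1,2), of lam] AB(3)
      abs_slope_bump_ge_sqrt[of "6 * lam" "chord_slope (Fl lam n) (A, B)"] assms(1)
    by (auto simp: mult.assoc)
qed

section \<open>The maximal slope\<close>

lemma mplus_eq_Max: "mplus lam n = Max ((\<lambda>p. \<bar>chord_slope (Fl lam n) p\<bar>) ` Ivs n)"
  unfolding mplus_def chord_slope_def by (simp add: split_def)

lemma abs_chord_slope_le_mplus: "p \<in> Ivs n \<Longrightarrow> \<bar>chord_slope (Fl lam n) p\<bar> \<le> mplus lam n"
  unfolding mplus_eq_Max by (simp add: Ivs_finite)

lemma mplus_le: "(\<And>p. p \<in> Ivs n \<Longrightarrow> \<bar>chord_slope (Fl lam n) p\<bar> \<le> X) \<Longrightarrow> mplus lam n \<le> X"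
  unfolding mplus_eq_Max by (simp add: Ivs_finite Ivs_nonempty)

lemma mplus_attained: "\<exists>p\<in>Ivs n. \<bar>chord_slope (Fl lam n) p\<bar> = mplus lam n"
  unfolding mplus_eq_Max
  by (metis (no_types, lifting) Ivs_finite Ivs_nonempty Max_in finite_imageI image_iff image_is_empty)

lemma mplus_0: "mplus lam 0 = 0"
  by (simp add: mplus_eq_Max chord_slope_def)

lemma mplus_nonneg: "0 \<le> mplus lam n"
  using mplus_attained[of n lam] by force

lemma mplus_Suc_le:
  assumes "0 \<le> lam"
  shows "mplus lam (Suc n) \<le> mplus lam n + 6 * lam * (1 + mplus lam n)"
proof (rule mplus_le)
  fix p assume "p \<in> Ivs (Suc n)"
  then obtain A B i where AB: "(A, B) \<in> Ivs n" "i < 4" "p = child i (A, B)"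
    by (auto simp: Ivs_Suc_iff)
  define m where "m = chord_slope (Fl lam n) (A, B)"
  have "\<bar>m\<bar> \<le> mplus lam n" unfolding m_def using AB(1) by (rule abs_chord_slope_le_mplus)
  then have "\<bar>m\<bar> + 6 * lam * (1 + \<bar>m\<bar>) \<le> mplus lam n + 6 * lam * (1 + mplus lam n)"
    using assms by (simp add: add_mono mult_left_mono)
  moreover have "\<bar>m\<bar> \<le> \<bar>m\<bar> + 6 * lam * (1 + \<bar>m\<bar>)" using assms by simp
  ultimately show "\<bar>chord_slope (Fl lam (Suc n)) p\<bar> \<le> mplus lam n + 6 * lam * (1 + mplus lam n)"
    using chord_slope_child[OF AB(1,2), of lam, folded m_def] AB(3) abs_slope_bump_le[of "6 * lam" m] assms
    by (auto simp: mult.assoc)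
qed

lemma mplus_Suc_ge:
  assumes "0 \<le> lam"
  shows "mplus lam n + 6 * lam * sqrt (1 + (mplus lam n)\<^sup>2) \<le> mplus lam (Suc n)"
proof -
  obtain A B where AB: "(A, B) \<in> Ivs n" "\<bar>chord_slope (Fl lam n) (A, B)\<bar> = mplus lam n"
    using mplus_attained by force
  define m where "m = chord_slope (Fl lam n) (A, B)"
  define i :: nat where "i = (if 0 \<le> m then 1 else 2)"
  have "(mplus lam n)\<^sup>2 = m\<^sup>2" using AB(2) by (metis m_def power2_abs)
  then have "mplus lam n + 6 * lam * sqrt (1 + (mplus lam n)\<^sup>2) = \<bar>m\<bar> + 6 * lam * sqrt (1 + m\<^sup>2)"
    using AB(2) by (simp add: m_def)
  also have "\<dots> \<le> \<bar>chord_slope (Fl lam (Suc n)) (child i (A, B))\<bar>"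
    using chord_slope_child[OF AB(1), of i lam, folded m_def] assms by (auto simp: i_def)
  also have "\<dots> \<le> mplus lam (Suc n)"
    using AB(1) unfolding i_def by (intro abs_chord_slope_le_mplus child_in_Ivs) auto
  finally show ?thesis .
qed

lemma mplus_le_power:
  assumes "0 \<le> lam"
  shows "mplus lam n + 1 \<le> (6 * lam + 1) ^ n"
proof (induction n)
  case (Suc n)
  have "mplus lam (Suc n) + 1 \<le> (6 * lam + 1) * (mplus lam n + 1)"
    using mplus_Suc_le[OF assms, of n] by (simp add: algebra_simps)
  also have "\<dots> \<le> (6 * lam + 1) * (6 * lam + 1) ^ n"
    using Suc.IH assms by (intro mult_left_mono) auto
  finally show ?case by simp
qed (simp add: mplus_0)

lemma mplus_ge_power:
  assumes "0 \<le> lam" "1 \<le> n"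
  shows "6 * lam / (6 * lam + 1) * (6 * lam + 1) ^ n \<le> mplus lam n"
  using assms(2)
proof (induction n rule: dec_induct)
  case base
  show ?case using mplus_Suc_ge[OF assms(1), of 0] assms(1) by (simp add: mplus_0)
next
  case (step n)
  have "6 * lam * mplus lam n \<le> 6 * lam * sqrt (1 + (mplus lam n)\<^sup>2)"
    using abs_le_sqrt_one_plus_square[of "mplus lam n"] mplus_nonneg[of lam n] assms(1)
    by (intro mult_left_mono) auto
  then have "(6 * lam + 1) * mplus lam n \<le> mplus lam (Suc n)"
    using mplus_Suc_ge[OF assms(1), of n] by (simp add: algebra_simps)
  moreover have "(6 * lam + 1) * (6 * lam / (6 * lam + 1) * (6 * lam + 1) ^ n) \<le> (6 * lam + 1) * mplus lam n"
    using step.IH assms(1) by (intro mult_left_mono) auto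
  ultimately show ?case by (simp add: mult_ac)
qed

section \<open>Slopes along the orbit of a point\<close>

definition point :: "real \<times> real \<Rightarrow> real \<Rightarrow> real" where
  "point p t = fst p + t * (snd p - fst p)"

text \<open>Intervals are oriented: on the branch [1/2, 2/3) the map Tmap is decreasing, so the
  interval following digit 2 is traversed backwards and recorded as a pair (c, d) with c > d.\<close>

definition branch :: "nat \<Rightarrow> real \<times> real \<Rightarrow> real \<times> real" where
  "branch d p = (if d = 2 then prod.swap (child 2 p) else child d p)"

lemma point_branch_Tmap: "0 \<le> y \<Longrightarrow> y \<le> 1 \<Longrightarrow> point p y = point (branch (Umap y) p) (Tmap y)"
  by (auto simp: point_def branch_def child_def node_def cut_point_def Umap_def Tmap_def field_simps)

lemma branch_oriented:
  assumes "p = q \<or> p = prod.swap q" "d < 4"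
  obtains j where "j < 4" "j \<in> {1, 2} \<longleftrightarrow> d \<in> {1, 2}"
    "branch d p = child j q \<or> branch d p = prod.swap (child j q)"
  using assms(1)
proof
  assume "p = q"
  then show ?thesis using that[of d] assms(2) by (auto simp: branch_def)
next
  assume "p = prod.swap q"
  then have "branch d p = child (3 - d) q \<or> branch d p = prod.swap (child (3 - d) q)"
    using assms(2) by (auto simp: branch_def child_swap)
  moreover have "3 - d \<in> {1, 2} \<longleftrightarrow> d \<in> {1, 2}" using assms(2) by auto
  ultimately show ?thesis using that[of "3 - d"] by simp
qed

primrec address :: "real \<Rightarrow> nat \<Rightarrow> real \<times> real" where
  "address x 0 = (0, 1)"
| "address x (Suc n) = branch (digit n x) (address x n)"

lemma digit_less_4: "digit n x < 4"
  by (simp add: digit_def Umap_def)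

lemma Tmap_iter_range: "x \<in> {0..1} \<Longrightarrow> (Tmap ^^ n) x \<in> {0..1}"
  by (induction n) (auto simp: Tmap_def)

lemma point_address:
  assumes "x \<in> {0..1}"
  shows "x = point (address x n) ((Tmap ^^ n) x)"
proof (induction n)
  case 0
  then show ?case by (simp add: point_def)
next
  case (Suc n)
  then show ?case
    using point_branch_Tmap[of "(Tmap ^^ n) x" "address x n"] Tmap_iter_range[OF assms, of n]
    by (simp add: digit_def)
qed

lemma address_oriented: "\<exists>q\<in>Ivs n. address x n = q \<or> address x n = prod.swap q"
proof (induction n)
  case (Suc n)
  then obtain q where q: "q \<in> Ivs n" "address x n = q \<or> address x n = prod.swap q" by blast
  obtain j where "j < 4" "address x (Suc n) = child j q \<or> address x (Suc n) = prod.swap (child j q)"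
    using branch_oriented[OF q(2) digit_less_4[of n x]] by auto
  then show ?case using child_in_Ivs[OF q(1)] by auto
qed simp

lemma chord_slope_address_Suc:
  fixes lam x :: real and n :: nat
  defines "m \<equiv> chord_slope (Fl lam n) (address x n)"
  shows "digit n x \<notin> {1, 2} \<Longrightarrow> chord_slope (Fl lam (Suc n)) (address x (Suc n)) = m"
      (is "_ \<Longrightarrow> ?outer")
    and "digit n x \<in> {1, 2} \<Longrightarrow> chord_slope (Fl lam (Suc n)) (address x (Suc n)) \<in>
      {m + 6 * lam * sqrt (1 + m\<^sup>2), m - 6 * lam * sqrt (1 + m\<^sup>2)}" (is "_ \<Longrightarrow> ?middle")
proof -
  obtain q where q: "q \<in> Ivs n" "address x n = q \<or> address x n = prod.swap q"
    using address_oriented by blast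
  obtain j where j: "j < 4" "j \<in> {1, 2} \<longleftrightarrow> digit n x \<in> {1, 2}"
    "address x (Suc n) = child j q \<or> address x (Suc n) = prod.swap (child j q)"
    using branch_oriented[OF q(2) digit_less_4[of n x]] by auto
  have "m = chord_slope (Fl lam n) q" using q(2) by (auto simp: m_def chord_slope_swap)
  moreover have "chord_slope (Fl lam (Suc n)) (address x (Suc n)) =
      chord_slope (Fl lam (Suc n)) (child j q)"
    using j(3) by (auto simp: chord_slope_swap)
  ultimately show "digit n x \<notin> {1, 2} \<Longrightarrow> ?outer" and "digit n x \<in> {1, 2} \<Longrightarrow> ?middle"
    using chord_slope_child[of "fst q" "snd q" n j lam] q(1) j(1,2) by auto
qed

lemma Tmap_iter_interior:
  assumes "x \<in> {0..1} - Eset"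
  shows "(Tmap ^^ n) x \<in> {0<..<1}"
proof (rule ccontr)
  assume "(Tmap ^^ n) x \<notin> {0<..<1}"
  then consider "(Tmap ^^ n) x = 0" | "(Tmap ^^ n) x = 1"
    using Tmap_iter_range[of x n] assms by force
  then have "(\<forall>k\<ge>n. digit k x = 0) \<or> (\<forall>k\<ge>n. digit k x = 3)"
  proof cases
    case 1
    have "(Tmap ^^ k) x = 0" if "n \<le> k" for k
      using that by (induction k rule: dec_induct) (simp_all add: 1 Tmap_def[of 0])
    then show ?thesis by (simp add: digit_def Umap_def)
  next
    case 2
    have "(Tmap ^^ k) x = 1" if "n \<le> k" for k
      using that by (induction k rule: dec_induct) (simp_all add: 2 Tmap_def[of 1])
    then show ?thesis by (simp add: digit_def Umap_def)
  qed
  then show False using assms unfolding Eset_def by blast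
qed

lemma slope_m_eq_chord_slope:
  assumes "(a, b) \<in> Ivs n" "x \<in> {a<..<b}"
  shows "slope_m lam n x = chord_slope (Fl lam n) (a, b)"
proof -
  let ?m = "chord_slope (Fl lam n) (a, b)"
  have affine_deriv: "((\<lambda>z. Fl lam n a + ?m * (z - a)) has_field_derivative ?m) (at x)"
    by (auto intro!: derivative_eq_intros)
  have "Fl lam n a + ?m * (z - a) = Fl lam n z" if "z \<in> {a<..<b}" for z
    using Fl_affine[OF assms(1), of z] that by simp
  then have "(Fl lam n has_field_derivative ?m) (at x)"
    using has_field_derivative_transform_within_open[OF affine_deriv _ assms(2)] by simp
  then show ?thesis unfolding slope_m_def by (rule DERIV_imp_deriv)
qed

lemma slope_m_address:
  assumes "x \<in> {0..1} - Eset"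
  shows "slope_m lam n x = chord_slope (Fl lam n) (address x n)"
proof -
  obtain a b where q: "(a, b) \<in> Ivs n" "address x n = (a, b) \<or> address x n = (b, a)"
    using address_oriented[of n x] by auto
  define y where "y = (Tmap ^^ n) x"
  have "0 < y" "y < 1" using Tmap_iter_interior[OF assms, of n] by (auto simp: y_def)
  moreover have "a < b" using q(1) by (rule Ivs_lt)
  ultimately have "0 < y * (b - a)" "y * (b - a) < b - a" by simp_all
  moreover have "x = point (address x n) y" using assms by (simp add: point_address y_def)
  ultimately have "x \<in> {a<..<b}" using q(2) by (auto simp: point_def algebra_simps)
  then show ?thesis
    using slope_m_eq_chord_slope[OF q(1)] q(2) chord_slope_swap[of _ "(a, b)"] by auto
qed

lemma beta12_Suc: "beta12 x (Suc n) = beta12 x n + (if digit n x \<in> {1, 2} then 1 else 0)"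
proof -
  have "{k. k < Suc n \<and> digit k x \<in> {1, 2}} =
      {k. k < n \<and> digit k x \<in> {1, 2}} \<union> (if digit n x \<in> {1, 2} then {n} else {})"
    by (auto simp: less_Suc_eq)
  then show ?thesis by (simp add: beta12_def)
qed

lemma beta12_mono: "n \<le> k \<Longrightarrow> beta12 x n \<le> beta12 x k"
  unfolding beta12_def by (rule card_mono) auto

lemma Eset_subset_Etilde: "Eset \<subseteq> Etilde"
proof
  fix x assume "x \<in> Eset"
  then obtain N where N: "\<forall>k\<ge>N. digit k x \<notin> {1, 2}" unfolding Eset_def by force
  have "beta12 x k = beta12 x N" if "N \<le> k" for k
    using that N by (induction k rule: dec_induct) (auto simp: beta12_Suc)
  then show "x \<in> Etilde" unfolding Etilde_def by blast
qed

lemma beta12_tendsto_at_top: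
  assumes "x \<notin> Etilde"
  shows "filterlim (beta12 x) at_top sequentially"
proof -
  have "\<exists>N. B \<le> beta12 x N" for B
  proof (induction B)
    case (Suc B)
    then obtain N where "B \<le> beta12 x N" by blast
    moreover obtain k where "N \<le> k" "beta12 x k \<noteq> beta12 x N"
      using assms unfolding Etilde_def by blast
    ultimately show ?case using beta12_mono[of N k x] by (intro exI[of _ k]) simp
  qed simp
  then show ?thesis
    unfolding filterlim_at_top eventually_sequentially by (meson beta12_mono order.trans)
qed

lemma abs_chord_slope_address_ge:
  assumes "1/3 \<le> lam" "0 < beta12 x n"
  shows "(6 * lam - 1) ^ (beta12 x n - 1) \<le> \<bar>chord_slope (Fl lam n) (address x n)\<bar>"
  using assms(2)
proof (induction n)
  case 0
  then show ?case by (simp add: beta12_def)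
next
  case (Suc n)
  define m where "m = chord_slope (Fl lam n) (address x n)"
  define \<rho> where "\<rho> = 6 * lam - 1"
  have "1 \<le> \<rho>" using assms(1) by (simp add: \<rho>_def)
  show ?case
  proof (cases "digit n x \<in> {1, 2}")
    case True
    have "\<rho> ^ beta12 x n \<le> \<rho> * sqrt (1 + m\<^sup>2)"
    proof (cases "beta12 x n = 0")
      case True
      then show ?thesis using \<open>1 \<le> \<rho>\<close> one_le_sqrt_one_plus_square[of m]
        by (simp add: mult_mono[of 1 \<rho> 1, simplified])
    next
      case False
      then have "\<rho> ^ beta12 x n = \<rho> * \<rho> ^ (beta12 x n - 1)" by (simp add: power_eq_if)
      also have "\<dots> \<le> \<rho> * sqrt (1 + m\<^sup>2)"
        using Suc.IH False abs_le_sqrt_one_plus_square[of m] \<open>1 \<le> \<rho>\<close>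
        by (intro mult_left_mono) (auto simp: m_def \<rho>_def)
      finally show ?thesis .
    qed
    also have "\<dots> \<le> \<bar>chord_slope (Fl lam (Suc n)) (address x (Suc n))\<bar>"
      using chord_slope_address_Suc(2)[OF True, of lam] abs_slope_bump_ge[of "6 * lam" m] assms(1)
      by (auto simp: m_def \<rho>_def mult.assoc)
    finally show ?thesis using True by (simp add: beta12_Suc \<rho>_def)
  next
    case False
    then show ?thesis
      using Suc chord_slope_address_Suc(1)[OF False, of lam] by (simp add: beta12_Suc)
  qed
qed

lemma abs_slope_m_tendsto_at_top:
  assumes "1/3 < lam" "x \<in> {0..1} - Etilde"
  shows "filterlim (\<lambda>n. \<bar>slope_m lam n x\<bar>) at_top sequentially"
proof -
  define \<rho> where "\<rho> = 6 * lam - 1"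
  have "1 < \<rho>" using assms(1) by (simp add: \<rho>_def)
  have "filterlim (\<lambda>k. norm (\<rho> ^ k)) at_top sequentially"
    using \<open>1 < \<rho>\<close> by (intro filterlim_at_infinity_imp_norm_at_top filterlim_realpow_sequentially_gt1) simp
  then have "filterlim (\<lambda>k. \<rho> ^ k) at_top sequentially"
    using \<open>1 < \<rho>\<close> by simp
  moreover have "filterlim (\<lambda>n. beta12 x n - 1) at_top sequentially"
    using filterlim_compose[OF filterlim_minus_const_nat_at_top beta12_tendsto_at_top] assms(2) by simp
  ultimately have "filterlim (\<lambda>n. \<rho> ^ (beta12 x n - 1)) at_top sequentially"
    by (rule filterlim_compose)
  moreover have "eventually (\<lambda>n. \<rho> ^ (beta12 x n - 1) \<le> \<bar>slope_m lam n x\<bar>) sequentially"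
  proof -
    have "eventually (\<lambda>n. 1 \<le> beta12 x n) sequentially"
      using beta12_tendsto_at_top[of x] assms(2) unfolding filterlim_at_top by blast
    moreover have "x \<in> {0..1} - Eset" using assms(2) Eset_subset_Etilde by blast
    ultimately show ?thesis
      using abs_chord_slope_address_ge assms(1) by (auto elim!: eventually_mono simp: \<rho>_def slope_m_address)
  qed
  ultimately show ?thesis by (rule filterlim_at_top_mono)
qed

lemma abs_slope_m_bounds:
  assumes "1/6 \<le> lam" "x \<in> {0..1} - Eset" "slope_m lam n x \<noteq> 0"
  shows "sqrt (36 * lam\<^sup>2 - 1) \<le> \<bar>slope_m lam n x\<bar> \<and> \<bar>slope_m lam n x\<bar> \<le> mplus lam n"
proof -
  obtain a b where "(a, b) \<in> Ivs n" "slope_m lam n x = chord_slope (Fl lam n) (a, b)"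
    using address_oriented[of n x] slope_m_address[OF assms(2), of lam] chord_slope_swap[of _ "(a, b)" for a b]
    by fastforce
  then show ?thesis
    using chord_slope_zero_or_ge[OF assms(1)] abs_chord_slope_le_mplus assms(3) by auto
qed

lemma mplus_comparable_power:
  assumes "1/6 < lam"
  shows "\<exists>c C. 0 < c \<and> c \<le> C \<and>
    (\<forall>n\<ge>1. c * (6 * lam + 1) ^ n \<le> mplus lam n \<and> mplus lam n \<le> C * (6 * lam + 1) ^ n)"
proof -
  let ?c = "6 * lam / (6 * lam + 1)"
  have "0 < ?c" "?c \<le> 1" using assms by simp_all
  moreover have "?c * (6 * lam + 1) ^ n \<le> mplus lam n \<and> mplus lam n \<le> 1 * (6 * lam + 1) ^ n"
    if "1 \<le> n" for n
    using mplus_ge_power[of lam n] mplus_le_power[of lam n] assms that by simp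
  ultimately show ?thesis by blast
qed

theorem lemma3p5:
  fixes lam :: real
  assumes "1/6 < lam" and "lam < 5/6"
  shows "(\<forall>x \<in> {0..1} - Eset. \<forall>n\<ge>1. slope_m lam n x \<noteq> 0 \<longrightarrow>
            sqrt (36 * lam\<^sup>2 - 1) \<le> \<bar>slope_m lam n x\<bar> \<and> \<bar>slope_m lam n x\<bar> \<le> mplus lam n)
       \<and> (\<exists>c C. 0 < c \<and> c \<le> C \<and>
            (\<forall>n\<ge>1. c * (6 * lam + 1) ^ n \<le> mplus lam n \<and> mplus lam n \<le> C * (6 * lam + 1) ^ n))
       \<and> (lam > 1/3 \<longrightarrow> (\<forall>x \<in> {0..1} - Etilde.
            filterlim (\<lambda>n. \<bar>slope_m lam n x\<bar>) at_top sequentially))"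
proof -
  have "1/6 \<le> lam" using assms(1) by simp
  then show ?thesis
    using abs_slope_m_bounds mplus_comparable_power[OF assms(1)] abs_slope_m_tendsto_at_top by blast
qed

end
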